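(* Let $V$ be a commutative valuation domain with quotient field $F$, $K/F$ a finite Galois extension with group $G$, $S$ the integral closure of $V$ in $K$, and $f:G\times G\to S\setminus\{0\}$ a normalized $2$-cocycle such that $f(\sigma,\tau)\notin M^2$ for every $\sigma,\tau\in G$ and every maximal ideal $M$ of $S$. Then for each maximal ideal $M$ of $S$, the graph $\mathrm{Gr}(f^M)$ is a chain.
   Context: $V$ has arbitrary Krull dimension. A normalized 2-cocycle satisfies $\sigma(f(\tau,\gamma))f(\sigma,\tau\gamma)=f(\sigma,\tau)f(\sigma\tau,\gamma)$, $f(1,\sigma)=f(\sigma,1)=1$. $H=\{\sigma\in G:f(\sigma,\sigma^{-1})\in U(S)\}$, a subgroup. For a maximal ideal $M$ of $S$, $\sigma H\le_M\tau H$ iff $f(\sigma,\sigma^{-1}\tau)\notin M$ is a well-defined preorder on the left coset space $G/H$; $\mathrm{Gr}(f^M)$ is the induced partial order on its equivalence classes (where $\sigma H\sim\tau H$ iff $\sigma H\le_M\tau H$ and $\tau H\le_M\sigma H$). A chain is a totally ordered set. *)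

theory Defs
  imports Main "HOL-Computational_Algebra.Polynomial"
begin

text \<open>The field K is modelled as the whole type 'k (a field). Subsets of 'k model
  the subrings V, S and the subfield F.\<close>

definition subring :: "'k::field set \<Rightarrow> bool" where
  "subring R \<longleftrightarrow> 0 \<in> R \<and> 1 \<in> R \<and> (\<forall>x\<in>R. \<forall>y\<in>R. x + y \<in> R \<and> x - y \<in> R \<and> x * y \<in> R)"

definition quotient_field :: "'k::field set \<Rightarrow> 'k set" where
  "quotient_field V = {a / b | a b. a \<in> V \<and> b \<in> V \<and> b \<noteq> 0}"

text \<open>Valuation domain (commutative; a subring of a field is a domain): for every nonzero
  x of the quotient field, x or x^{-1} lies in V.\<close>
definition valuation_domain :: "'k::field set \<Rightarrow> bool" where
  "valuation_domain V \<longleftrightarrow> subring V \<and>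
     (\<forall>x\<in>quotient_field V. x \<noteq> 0 \<longrightarrow> x \<in> V \<or> inverse x \<in> V)"

definition field_aut :: "('k::field \<Rightarrow> 'k) \<Rightarrow> bool" where
  "field_aut \<sigma> \<longleftrightarrow> bij \<sigma> \<and> \<sigma> 1 = 1 \<and>
     (\<forall>x y. \<sigma> (x + y) = \<sigma> x + \<sigma> y \<and> \<sigma> (x * y) = \<sigma> x * \<sigma> y)"

definition Gal :: "'k::field set \<Rightarrow> ('k \<Rightarrow> 'k) set" where
  "Gal F = {\<sigma>. field_aut \<sigma> \<and> (\<forall>x\<in>F. \<sigma> x = x)}"

definition finite_dim_over :: "'k::field set \<Rightarrow> bool" where
  "finite_dim_over F \<longleftrightarrow> (\<exists>B. finite B \<and>
     (\<forall>x. \<exists>c. (\<forall>b\<in>B. c b \<in> F) \<and> x = (\<Sum>b\<in>B. c b * b)))"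

definition finite_galois :: "'k::field set \<Rightarrow> bool" where
  "finite_galois F \<longleftrightarrow> finite_dim_over F \<and> {x. \<forall>\<sigma>\<in>Gal F. \<sigma> x = x} = F"

definition integral_closure :: "'k::field set \<Rightarrow> 'k set" where
  "integral_closure V = {x. \<exists>p. lead_coeff p = 1 \<and> (\<forall>i. coeff p i \<in> V) \<and> poly p x = 0}"

definition ideal_of :: "'k::field set \<Rightarrow> 'k set \<Rightarrow> bool" where
  "ideal_of S I \<longleftrightarrow> I \<subseteq> S \<and> 0 \<in> I \<and> (\<forall>x\<in>I. \<forall>y\<in>I. x + y \<in> I \<and> x - y \<in> I) \<and>
     (\<forall>s\<in>S. \<forall>x\<in>I. s * x \<in> I)"

definition maximal_ideal_of :: "'k::field set \<Rightarrow> 'k set \<Rightarrow> bool" where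
  "maximal_ideal_of S M \<longleftrightarrow> ideal_of S M \<and> M \<noteq> S \<and>
     (\<forall>J. ideal_of S J \<and> M \<subseteq> J \<longrightarrow> J = M \<or> J = S)"

definition ideal_square :: "'k::field set \<Rightarrow> 'k set" where
  "ideal_square M = {(\<Sum>i<n. a i * b i) | (n::nat) a b. \<forall>i<n. a i \<in> M \<and> b i \<in> M}"

definition units_of_ring :: "'k::field set \<Rightarrow> 'k set" where
  "units_of_ring S = {x \<in> S. x \<noteq> 0 \<and> inverse x \<in> S}"

definition normalized_cocycle :: "('k::field \<Rightarrow> 'k) set \<Rightarrow> 'k set \<Rightarrow>
    (('k \<Rightarrow> 'k) \<Rightarrow> ('k \<Rightarrow> 'k) \<Rightarrow> 'k) \<Rightarrow> bool" where
  "normalized_cocycle G S f \<longleftrightarrow>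
     (\<forall>\<sigma>\<in>G. \<forall>\<tau>\<in>G. f \<sigma> \<tau> \<in> S - {0}) \<and>
     (\<forall>\<sigma>\<in>G. \<forall>\<tau>\<in>G. \<forall>\<gamma>\<in>G. \<sigma> (f \<tau> \<gamma>) * f \<sigma> (\<tau> \<circ> \<gamma>) = f \<sigma> \<tau> * f (\<sigma> \<circ> \<tau>) \<gamma>) \<and>
     (\<forall>\<sigma>\<in>G. f id \<sigma> = 1 \<and> f \<sigma> id = 1)"

definition H_of :: "('k::field \<Rightarrow> 'k) set \<Rightarrow> 'k set \<Rightarrow> (('k \<Rightarrow> 'k) \<Rightarrow> ('k \<Rightarrow> 'k) \<Rightarrow> 'k)
    \<Rightarrow> ('k \<Rightarrow> 'k) set" where
  "H_of G S f = {\<sigma> \<in> G. f \<sigma> (inv \<sigma>) \<in> units_of_ring S}"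

definition lcoset :: "('k \<Rightarrow> 'k) \<Rightarrow> ('k \<Rightarrow> 'k) set \<Rightarrow> ('k \<Rightarrow> 'k) set" where
  "lcoset \<sigma> H = (\<lambda>h. \<sigma> \<circ> h) ` H"

definition left_cosets :: "('k \<Rightarrow> 'k) set \<Rightarrow> ('k \<Rightarrow> 'k) set \<Rightarrow> ('k \<Rightarrow> 'k) set set" where
  "left_cosets G H = {lcoset \<sigma> H | \<sigma>. \<sigma> \<in> G}"

text \<open>The preorder \<le>_M on G/H: sigma H \<le>_M tau H iff f(sigma, sigma^{-1} tau) \<notin> M
  (well defined on cosets, so quantifying over representatives existentially is harmless).\<close>
definition coset_le :: "('k::field \<Rightarrow> 'k) set \<Rightarrow> 'k set \<Rightarrow> (('k \<Rightarrow> 'k) \<Rightarrow> ('k \<Rightarrow> 'k) \<Rightarrow> 'k)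
    \<Rightarrow> 'k set \<Rightarrow> ('k \<Rightarrow> 'k) set \<Rightarrow> ('k \<Rightarrow> 'k) set \<Rightarrow> bool" where
  "coset_le G S f M A B \<longleftrightarrow> (\<exists>\<sigma>\<in>G. \<exists>\<tau>\<in>G. A = lcoset \<sigma> (H_of G S f) \<and>
      B = lcoset \<tau> (H_of G S f) \<and> f \<sigma> (inv \<sigma> \<circ> \<tau>) \<notin> M)"

definition coset_equiv where
  "coset_equiv G S f M A B \<longleftrightarrow> coset_le G S f M A B \<and> coset_le G S f M B A"

definition Gr_classes where
  "Gr_classes G S f M = {{B \<in> left_cosets G (H_of G S f). coset_equiv G S f M A B} | A.
      A \<in> left_cosets G (H_of G S f)}"

definition Gr_le where
  "Gr_le G S f M X Y \<longleftrightarrow> (\<exists>A\<in>X. \<exists>B\<in>Y. coset_le G S f M A B)"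

definition Gr_is_chain where
  "Gr_is_chain G S f M \<longleftrightarrow>
     (\<forall>X\<in>Gr_classes G S f M. \<forall>Y\<in>Gr_classes G S f M. Gr_le G S f M X Y \<or> Gr_le G S f M Y X)"

end

theory Submission
  imports Defs
begin

text \<open>Put \<rho> = \<sigma>\<inverse>\<tau> and \<rho>' = \<tau>\<inverse>\<sigma>, so that \<rho>\<rho>' = 1 and \<sigma>\<rho> = \<tau>. The cocycle identity for
  (\<sigma>, \<rho>, \<rho>') then reads \<sigma>(f(\<rho>, \<rho>')) = f(\<sigma>, \<rho>) f(\<tau>, \<rho>'). If neither \<sigma>H \<le>_M \<tau>H nor
  \<tau>H \<le>_M \<sigma>H held, both factors would lie in M, and f(\<rho>, \<rho>') would lie in the square of the
  maximal ideal \<sigma>\<inverse>(M), against the hypothesis. Hence any two cosets are comparable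
  (in particular every coset is comparable with itself), so Gr(f^M) is a chain.\<close>

lemma field_aut_zero: "field_aut \<sigma> \<Longrightarrow> \<sigma> 0 = 0"
  unfolding field_aut_def by (metis add_cancel_right_right)

lemma field_aut_add: "field_aut \<sigma> \<Longrightarrow> \<sigma> (x + y) = \<sigma> x + \<sigma> y"
  unfolding field_aut_def by blast

lemma field_aut_mult: "field_aut \<sigma> \<Longrightarrow> \<sigma> (x * y) = \<sigma> x * \<sigma> y"
  unfolding field_aut_def by blast

lemma field_aut_diff: "field_aut \<sigma> \<Longrightarrow> \<sigma> (x - y) = \<sigma> x - \<sigma> y"
  using field_aut_add[of \<sigma> "x - y" y] by (simp add: eq_diff_eq)

lemma field_aut_inv_apply: "field_aut \<sigma> \<Longrightarrow> \<sigma> (inv \<sigma> x) = x"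
  unfolding field_aut_def by (meson bij_inv_eq_iff)

lemma field_aut_apply_inv: "field_aut \<sigma> \<Longrightarrow> inv \<sigma> (\<sigma> x) = x"
  unfolding field_aut_def by (meson bij_is_inj inv_f_f)

lemma field_aut_inv:
  assumes "field_aut \<sigma>" shows "field_aut (inv \<sigma>)"
proof -
  have "bij (inv \<sigma>)" using assms unfolding field_aut_def using bij_imp_bij_inv by blast
  moreover have "inv \<sigma> 1 = 1" using field_aut_apply_inv[OF assms, of 1] assms
    unfolding field_aut_def by simp
  moreover have "inv \<sigma> (x + y) = inv \<sigma> x + inv \<sigma> y" "inv \<sigma> (x * y) = inv \<sigma> x * inv \<sigma> y" for x y
    using field_aut_add[OF assms, of "inv \<sigma> x" "inv \<sigma> y"]
      field_aut_mult[OF assms, of "inv \<sigma> x" "inv \<sigma> y"]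
      field_aut_inv_apply[OF assms] field_aut_apply_inv[OF assms] by metis+
  ultimately show ?thesis unfolding field_aut_def by blast
qed

lemma field_aut_comp:
  assumes "field_aut \<sigma>" "field_aut \<tau>" shows "field_aut (\<sigma> \<circ> \<tau>)"
  using assms unfolding field_aut_def by (simp add: bij_comp)

lemma field_aut_poly:
  assumes "field_aut \<sigma>" and "\<forall>i. \<sigma> (coeff p i) = coeff p i"
  shows "\<sigma> (poly p x) = poly p (\<sigma> x)"
  using assms(2)
proof (induction p rule: pCons_induct)
  case 0
  then show ?case using field_aut_zero[OF assms(1)] by simp
next
  case (pCons c p)
  have "\<sigma> c = c" using pCons.prems[rule_format, of 0] by simp
  moreover have "\<forall>i. \<sigma> (coeff p i) = coeff p i" using pCons.prems by (metis coeff_pCons_Suc)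
  ultimately show ?case
    using pCons.IH field_aut_add[OF assms(1)] field_aut_mult[OF assms(1)] by simp
qed

lemma Gal_inv:
  assumes "\<sigma> \<in> Gal F" shows "inv \<sigma> \<in> Gal F"
proof -
  have aut: "field_aut \<sigma>" and fix_F: "\<forall>x\<in>F. \<sigma> x = x" using assms unfolding Gal_def by auto
  have "inv \<sigma> x = x" if "x \<in> F" for x
    using field_aut_apply_inv[OF aut, of x] fix_F that by simp
  then show ?thesis using field_aut_inv[OF aut] unfolding Gal_def by blast
qed

lemma Gal_comp: "\<sigma> \<in> Gal F \<Longrightarrow> \<tau> \<in> Gal F \<Longrightarrow> \<sigma> \<circ> \<tau> \<in> Gal F"
  unfolding Gal_def by (simp add: field_aut_comp)

lemma subring_subset_quotient_field: "subring V \<Longrightarrow> V \<subseteq> quotient_field V"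
  unfolding subring_def quotient_field_def by force

lemma Gal_maps_integral_closure:
  assumes "subring V" "\<sigma> \<in> Gal (quotient_field V)" "x \<in> integral_closure V"
  shows "\<sigma> x \<in> integral_closure V"
proof -
  obtain p where p: "lead_coeff p = 1" "\<forall>i. coeff p i \<in> V" "poly p x = 0"
    using assms(3) unfolding integral_closure_def by blast
  have aut: "field_aut \<sigma>" and fix_F: "\<forall>y\<in>quotient_field V. \<sigma> y = y"
    using assms(2) unfolding Gal_def by auto
  have "\<forall>i. \<sigma> (coeff p i) = coeff p i"
    using p(2) fix_F subring_subset_quotient_field[OF assms(1)] by blast
  then have "poly p (\<sigma> x) = 0" using field_aut_poly[OF aut] p(3) field_aut_zero[OF aut] by metis
  then show ?thesis using p unfolding integral_closure_def by blast
qed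

lemma Gal_image_integral_closure:
  assumes "subring V" "\<sigma> \<in> Gal (quotient_field V)"
  shows "\<sigma> ` integral_closure V = integral_closure V"
proof
  show "\<sigma> ` integral_closure V \<subseteq> integral_closure V"
    using Gal_maps_integral_closure[OF assms] by blast
  show "integral_closure V \<subseteq> \<sigma> ` integral_closure V"
  proof
    fix x assume "x \<in> integral_closure V"
    then have "inv \<sigma> x \<in> integral_closure V"
      using Gal_maps_integral_closure[OF assms(1) Gal_inv[OF assms(2)]] by blast
    moreover have "x = \<sigma> (inv \<sigma> x)"
      using assms(2) unfolding Gal_def by (simp add: field_aut_inv_apply)
    ultimately show "x \<in> \<sigma> ` integral_closure V" by blast
  qed
qed

lemma ideal_of_image:
  assumes aut: "field_aut \<sigma>" and S: "\<sigma> ` S = S" and I: "ideal_of S I"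
  shows "ideal_of S (\<sigma> ` I)"
  unfolding ideal_of_def
proof (intro conjI ballI)
  show "\<sigma> ` I \<subseteq> S" "0 \<in> \<sigma> ` I"
    using I S field_aut_zero[OF aut] unfolding ideal_of_def by (auto intro: image_eqI[of 0])
next
  fix x y assume "x \<in> \<sigma> ` I" "y \<in> \<sigma> ` I"
  then obtain u v where uv: "u \<in> I" "v \<in> I" "x = \<sigma> u" "y = \<sigma> v" by blast
  then have "u + v \<in> I" "u - v \<in> I" using I unfolding ideal_of_def by auto
  moreover have "x + y = \<sigma> (u + v)" "x - y = \<sigma> (u - v)"
    using uv field_aut_add[OF aut] field_aut_diff[OF aut] by auto
  ultimately show "x + y \<in> \<sigma> ` I" "x - y \<in> \<sigma> ` I" by auto
next
  fix s x assume "s \<in> S" "x \<in> \<sigma> ` I"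
  then obtain t u where tu: "t \<in> S" "s = \<sigma> t" "u \<in> I" "x = \<sigma> u" using S by blast
  then have "t * u \<in> I" using I unfolding ideal_of_def by blast
  moreover have "s * x = \<sigma> (t * u)" using tu field_aut_mult[OF aut] by simp
  ultimately show "s * x \<in> \<sigma> ` I" by blast
qed

lemma maximal_ideal_of_image:
  assumes aut: "field_aut \<sigma>" and S: "\<sigma> ` S = S" and M: "maximal_ideal_of S M"
  shows "maximal_ideal_of S (\<sigma> ` M)"
proof -
  have inj: "inj \<sigma>" using aut unfolding field_aut_def by (simp add: bij_is_inj)
  have aut_inv: "field_aut (inv \<sigma>)" using field_aut_inv[OF aut] .
  have S_inv: "inv \<sigma> ` S = S" using S inj by (metis image_inv_f_f)
  have "ideal_of S (\<sigma> ` M)" using ideal_of_image[OF aut S] M unfolding maximal_ideal_of_def by blast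
  moreover have "\<sigma> ` M \<noteq> S" using M S inj unfolding maximal_ideal_of_def by (metis inj_image_eq_iff)
  moreover have "J = \<sigma> ` M \<or> J = S" if J: "ideal_of S J" "\<sigma> ` M \<subseteq> J" for J
  proof -
    have "ideal_of S (inv \<sigma> ` J)" using ideal_of_image[OF aut_inv S_inv J(1)] .
    moreover have "M \<subseteq> inv \<sigma> ` J" using J(2) inj by (metis image_inv_f_f image_mono)
    ultimately have "inv \<sigma> ` J = M \<or> inv \<sigma> ` J = S" using M unfolding maximal_ideal_of_def by blast
    moreover have "\<sigma> ` inv \<sigma> ` J = J"
      using aut unfolding field_aut_def by (simp add: bij_is_surj image_f_inv_f)
    ultimately show ?thesis using S by metis
  qed
  ultimately show ?thesis unfolding maximal_ideal_of_def by blast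
qed

lemma mult_mem_ideal_square: "a \<in> M \<Longrightarrow> b \<in> M \<Longrightarrow> a * b \<in> ideal_square M"
  unfolding ideal_square_def by (rule CollectI, rule exI[of _ 1]) auto

lemma cocycle_inverse_pair:
  assumes coc: "normalized_cocycle (Gal F) S f" and "\<sigma> \<in> Gal F" "\<tau> \<in> Gal F"
  shows "\<sigma> (f (inv \<sigma> \<circ> \<tau>) (inv \<tau> \<circ> \<sigma>)) = f \<sigma> (inv \<sigma> \<circ> \<tau>) * f \<tau> (inv \<tau> \<circ> \<sigma>)"
proof -
  have aut: "field_aut \<sigma>" "field_aut \<tau>" using assms(2,3) unfolding Gal_def by auto
  have inverse: "(inv \<sigma> \<circ> \<tau>) \<circ> (inv \<tau> \<circ> \<sigma>) = id" and shift: "\<sigma> \<circ> (inv \<sigma> \<circ> \<tau>) = \<tau>"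
    using field_aut_inv_apply[OF aut(1)] field_aut_inv_apply[OF aut(2)] field_aut_apply_inv[OF aut(1)]
    by (auto simp: fun_eq_iff)
  have "inv \<sigma> \<circ> \<tau> \<in> Gal F" "inv \<tau> \<circ> \<sigma> \<in> Gal F"
    using assms(2,3) by (simp_all add: Gal_comp Gal_inv)
  then have "\<sigma> (f (inv \<sigma> \<circ> \<tau>) (inv \<tau> \<circ> \<sigma>)) * f \<sigma> ((inv \<sigma> \<circ> \<tau>) \<circ> (inv \<tau> \<circ> \<sigma>))
      = f \<sigma> (inv \<sigma> \<circ> \<tau>) * f (\<sigma> \<circ> (inv \<sigma> \<circ> \<tau>)) (inv \<tau> \<circ> \<sigma>)"
    using coc assms(2) unfolding normalized_cocycle_def by blast
  moreover have "f \<sigma> id = 1" using coc assms(2) unfolding normalized_cocycle_def by blast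
  ultimately show ?thesis by (simp only: inverse shift mult_1_right)
qed

lemma cosets_comparable:
  assumes coc: "normalized_cocycle (Gal F) S f"
    and sq: "\<forall>\<alpha>\<in>Gal F. \<forall>\<beta>\<in>Gal F. f \<alpha> \<beta> \<notin> ideal_square (inv \<sigma> ` M)"
    and \<sigma>: "\<sigma> \<in> Gal F" and \<tau>: "\<tau> \<in> Gal F"
  shows "f \<sigma> (inv \<sigma> \<circ> \<tau>) \<notin> M \<or> f \<tau> (inv \<tau> \<circ> \<sigma>) \<notin> M"
proof (rule ccontr)
  assume "\<not> ?thesis"
  then have "inv \<sigma> (f \<sigma> (inv \<sigma> \<circ> \<tau>)) * inv \<sigma> (f \<tau> (inv \<tau> \<circ> \<sigma>)) \<in> ideal_square (inv \<sigma> ` M)"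
    by (auto intro: mult_mem_ideal_square)
  moreover have aut: "field_aut \<sigma>" using \<sigma> unfolding Gal_def by blast
  ultimately have "f (inv \<sigma> \<circ> \<tau>) (inv \<tau> \<circ> \<sigma>) \<in> ideal_square (inv \<sigma> ` M)"
    using cocycle_inverse_pair[OF coc \<sigma> \<tau>] field_aut_mult[OF field_aut_inv[OF aut]]
      field_aut_apply_inv[OF aut] by metis
  moreover have "inv \<sigma> \<circ> \<tau> \<in> Gal F" "inv \<tau> \<circ> \<sigma> \<in> Gal F"
    using \<sigma> \<tau> by (simp_all add: Gal_comp Gal_inv)
  ultimately show False using sq by blast
qed

lemma Gr_is_chainI:
  assumes comparable: "\<forall>\<sigma>\<in>G. \<forall>\<tau>\<in>G. f \<sigma> (inv \<sigma> \<circ> \<tau>) \<notin> M \<or> f \<tau> (inv \<tau> \<circ> \<sigma>) \<notin> M"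
  shows "Gr_is_chain G S f M"
  unfolding Gr_is_chain_def
proof (intro ballI)
  let ?H = "H_of G S f"
  have le: "coset_le G S f M (lcoset \<sigma> ?H) (lcoset \<tau> ?H) \<or> coset_le G S f M (lcoset \<tau> ?H) (lcoset \<sigma> ?H)"
    if "\<sigma> \<in> G" "\<tau> \<in> G" for \<sigma> \<tau>
    using comparable that unfolding coset_le_def by blast
  have mem: "lcoset \<sigma> ?H \<in> {B \<in> left_cosets G ?H. coset_equiv G S f M (lcoset \<sigma> ?H) B}"
    if "\<sigma> \<in> G" for \<sigma>
    using le[OF that that] that unfolding coset_equiv_def left_cosets_def by auto
  fix X Y assume "X \<in> Gr_classes G S f M" "Y \<in> Gr_classes G S f M"
  then obtain \<sigma> \<tau> where \<sigma>\<tau>: "\<sigma> \<in> G" "\<tau> \<in> G"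
    and "X = {B \<in> left_cosets G ?H. coset_equiv G S f M (lcoset \<sigma> ?H) B}"
    and "Y = {B \<in> left_cosets G ?H. coset_equiv G S f M (lcoset \<tau> ?H) B}"
    unfolding Gr_classes_def left_cosets_def by blast
  then have "lcoset \<sigma> ?H \<in> X" "lcoset \<tau> ?H \<in> Y" using mem by simp_all
  with le[OF \<sigma>\<tau>] show "Gr_le G S f M X Y \<or> Gr_le G S f M Y X"
    unfolding Gr_le_def by blast
qed

theorem proposition2p10:
  fixes V :: "'k::field set"
    and f :: "('k \<Rightarrow> 'k) \<Rightarrow> ('k \<Rightarrow> 'k) \<Rightarrow> 'k"
  assumes "valuation_domain V"
    and "finite_galois (quotient_field V)"
    and "normalized_cocycle (Gal (quotient_field V)) (integral_closure V) f"
    and "\<forall>M. maximal_ideal_of (integral_closure V) M \<longrightarrow>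
           (\<forall>\<sigma>\<in>Gal (quotient_field V). \<forall>\<tau>\<in>Gal (quotient_field V). f \<sigma> \<tau> \<notin> ideal_square M)"
  shows "\<forall>M. maximal_ideal_of (integral_closure V) M \<longrightarrow>
           Gr_is_chain (Gal (quotient_field V)) (integral_closure V) f M"
proof (intro allI impI Gr_is_chainI ballI)
  fix M \<sigma> \<tau>
  assume M: "maximal_ideal_of (integral_closure V) M"
    and \<sigma>: "\<sigma> \<in> Gal (quotient_field V)" and \<tau>: "\<tau> \<in> Gal (quotient_field V)"
  have V: "subring V" using assms(1) unfolding valuation_domain_def by blast
  have "inv \<sigma> \<in> Gal (quotient_field V)" using Gal_inv[OF \<sigma>] .
  then have "maximal_ideal_of (integral_closure V) (inv \<sigma> ` M)"
    using maximal_ideal_of_image Gal_image_integral_closure[OF V] M unfolding Gal_def by blast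
  then show "f \<sigma> (inv \<sigma> \<circ> \<tau>) \<notin> M \<or> f \<tau> (inv \<tau> \<circ> \<sigma>) \<notin> M"
    using cosets_comparable[OF assms(3) _ \<sigma> \<tau>] assms(4) by blast
qed

end
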